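(* Let $w,\pi,u\in S_n$ with $u\leq_L w$ and $u\leq_R\pi$. If \[ \ell(wu^{-1})+\ell(u)+\ell(u^{-1}\pi)>\ell(wu^{-1}\pi), \] then there exists $u'\in S_n$ with $u'>_B u$ in strong Bruhat order such that $u'\leq_L w$ and $u'\leq_R\pi$.
   Context: $S_n$ is the symmetric group with product $(uv)(i)=u(v(i))$. The length $\ell(w)$ is the number of inversions $\{(i,j):i<j,\ w(i)>w(j)\}$. Left weak order: $v\leq_L w$ iff $w=zv$ with $\ell(w)=\ell(z)+\ell(v)$; right weak order: $v\leq_R w$ iff $w=vz$ with $\ell(w)=\ell(v)+\ell(z)$. Strong Bruhat order $\leq_B$ is the partial order generated by the relations $v<_B vt$ whenever $t$ is a transposition and $\ell(vt)>\ell(v)$. *)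

theory Defs
  imports "HOL-Combinatorics.Permutations"
begin

text \<open>The symmetric group S_n: permutations of {1..n}, with product (u v)(i) = u(v(i)),
  i.e. function composition u \<circ> v.\<close>

definition Sym :: "nat \<Rightarrow> (nat \<Rightarrow> nat) set" where
  "Sym n = {p. p permutes {1..n}}"

definition len :: "nat \<Rightarrow> (nat \<Rightarrow> nat) \<Rightarrow> nat" where
  "len n w = card {(i, j). i \<in> {1..n} \<and> j \<in> {1..n} \<and> i < j \<and> w i > w j}"

definition left_weak :: "nat \<Rightarrow> (nat \<Rightarrow> nat) \<Rightarrow> (nat \<Rightarrow> nat) \<Rightarrow> bool" where
  "left_weak n v w \<longleftrightarrow> v \<in> Sym n \<and> w \<in> Sym n \<and>
     (\<exists>z \<in> Sym n. w = z \<circ> v \<and> len n w = len n z + len n v)"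

definition right_weak :: "nat \<Rightarrow> (nat \<Rightarrow> nat) \<Rightarrow> (nat \<Rightarrow> nat) \<Rightarrow> bool" where
  "right_weak n v w \<longleftrightarrow> v \<in> Sym n \<and> w \<in> Sym n \<and>
     (\<exists>z \<in> Sym n. w = v \<circ> z \<and> len n w = len n v + len n z)"

definition bruhat_step :: "nat \<Rightarrow> (nat \<Rightarrow> nat) \<Rightarrow> (nat \<Rightarrow> nat) \<Rightarrow> bool" where
  "bruhat_step n v w \<longleftrightarrow> v \<in> Sym n \<and>
     (\<exists>a \<in> {1..n}. \<exists>b \<in> {1..n}. a \<noteq> b \<and> w = v \<circ> Transposition.transpose a b
        \<and> len n w > len n v)"

definition bruhat_less :: "nat \<Rightarrow> (nat \<Rightarrow> nat) \<Rightarrow> (nat \<Rightarrow> nat) \<Rightarrow> bool" where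
  "bruhat_less n = (bruhat_step n)\<^sup>+\<^sup>+"

end

theory Submission
  imports Defs
begin

text \<open>
  Write \<pi> = u y with l(\<pi>) = l(u) + l(y); the hypothesis then says l(w y) < l(w) + l(y), and
  u \<le>_L w means that every inversion of u is one of w. Induct on l(y). Choose a simple
  transposition s with y = s y' and l(y') = l(y) - 1; then u < u s and u s \<le>_R \<pi>. If s is a
  right descent of w, then u s \<le>_L w and u' = u s works. Otherwise (u s, w s, y') satisfies the
  hypotheses again, and the induction gives v > u s with v \<le>_L w s and v \<le>_R \<pi>. If s is a
  right descent of v, then u' = v s works, u < v s being the lifting property of Bruhat order;
  otherwise v \<le>_L w and u' = v works.
\<close>

section \<open>Inversions and length\<close>

definition inversions :: "nat \<Rightarrow> (nat \<Rightarrow> nat) \<Rightarrow> (nat \<times> nat) set" where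
  "inversions n w = {(i, j). i \<in> {1..n} \<and> j \<in> {1..n} \<and> i < j \<and> w i > w j}"

lemma len_eq_card_inversions: "len n w = card (inversions n w)"
  by (simp add: len_def inversions_def)

lemma finite_inversions [simp]: "finite (inversions n w)"
  by (rule finite_subset[of _ "{1..n} \<times> {1..n}"]) (auto simp: inversions_def)

lemma Sym_permutes: "p \<in> Sym n \<Longrightarrow> p permutes {1..n}"
  by (simp add: Sym_def)

lemma Sym_comp: "p \<in> Sym n \<Longrightarrow> q \<in> Sym n \<Longrightarrow> p \<circ> q \<in> Sym n"
  by (simp add: Sym_def permutes_compose)

lemma Sym_inv: "p \<in> Sym n \<Longrightarrow> inv p \<in> Sym n"
  by (simp add: Sym_def permutes_inv)

lemma Sym_transpose: "a \<in> {1..n} \<Longrightarrow> b \<in> {1..n} \<Longrightarrow> Transposition.transpose a b \<in> Sym n"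
  by (simp add: Sym_def permutes_swap_id)

lemma Sym_inj: "p \<in> Sym n \<Longrightarrow> p i = p j \<longleftrightarrow> i = j"
  by (meson Sym_permutes permutes_inj injD)

lemma Sym_inv_apply: "p \<in> Sym n \<Longrightarrow> inv p (p i) = i"
  by (meson Sym_permutes permutes_inverses(2))

lemma Sym_apply_inv: "p \<in> Sym n \<Longrightarrow> p (inv p i) = i"
  by (meson Sym_permutes permutes_inverses(1))

lemma Sym_range:
  assumes "p \<in> Sym n"
  shows "1 \<le> i \<Longrightarrow> 1 \<le> p i" and "i \<le> n \<Longrightarrow> p i \<le> n"
  using permutes_in_image[OF Sym_permutes[OF assms]] permutes_not_in[OF Sym_permutes[OF assms]]
  by (metis atLeastAtMost_iff)+

lemma len_comp:
  assumes a: "a \<in> Sym n" and b: "b \<in> Sym n"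
  shows "len n (a \<circ> b) + 2 * card {(i, j) \<in> inversions n b. a (b i) < a (b j)}
    = len n a + len n b"
proof -
  \<comment> \<open>The pairs Y whose b-images a inverts correspond to the inversions of a, and split into A1
    and the reversals of C.\<close>
  define A1 where "A1 = {(i, j). i \<in> {1..n} \<and> j \<in> {1..n} \<and> i < j \<and> b i < b j \<and> a (b i) > a (b j)}"
  define A2 where "A2 = {(i, j). i \<in> {1..n} \<and> j \<in> {1..n} \<and> i < j \<and> b i > b j \<and> a (b i) > a (b j)}"
  define C where "C = {(i, j) \<in> inversions n b. a (b i) < a (b j)}"
  define C' where "C' = {(i, j). i \<in> {1..n} \<and> j \<in> {1..n} \<and> i > j \<and> b i < b j \<and> a (b i) > a (b j)}"
  define Y where "Y = {(i, j). i \<in> {1..n} \<and> j \<in> {1..n} \<and> b i < b j \<and> a (b i) > a (b j)}"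
  have fin: "finite A1" "finite A2" "finite C" "finite C'"
    by (rule finite_subset[of _ "{1..n} \<times> {1..n}"]; auto simp: A1_def A2_def C_def C'_def inversions_def)+
  have bne: "b i \<noteq> b j" and abne: "a (b i) \<noteq> a (b j)" if "i < j" for i j
    using that Sym_inj[OF a] Sym_inj[OF b] by auto
  have "inversions n (a \<circ> b) = A1 \<union> A2"
    by (auto simp: inversions_def A1_def A2_def) (meson bne nat_neq_iff)
  moreover have "A1 \<inter> A2 = {}" by (auto simp: A1_def A2_def)
  ultimately have len_ab: "len n (a \<circ> b) = card A1 + card A2"
    by (simp add: len_eq_card_inversions card_Un_disjoint fin)
  have "inversions n b = A2 \<union> C"
    by (auto simp: inversions_def A2_def C_def) (meson abne nat_neq_iff)
  moreover have "A2 \<inter> C = {}" by (auto simp: A2_def C_def)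
  ultimately have len_b: "len n b = card A2 + card C"
    by (simp add: len_eq_card_inversions card_Un_disjoint fin)
  have "Y = A1 \<union> C'"
    using Sym_inj[OF b] by (auto simp: Y_def A1_def C'_def) (metis nat_neq_iff less_irrefl)+
  moreover have "A1 \<inter> C' = {}" by (auto simp: A1_def C'_def)
  ultimately have card_Y: "card Y = card A1 + card C'"
    by (simp add: card_Un_disjoint fin)
  have "bij_betw (\<lambda>(i, j). (j, i)) C' C"
    by (rule bij_betw_byWitness[where f'="\<lambda>(i, j). (j, i)"]) (auto simp: C'_def C_def inversions_def)
  then have card_C': "card C' = card C" by (rule bij_betw_same_card)
  have "bij_betw (\<lambda>(i, j). (b i, b j)) Y (inversions n a)"
    by (rule bij_betw_byWitness[where f'="\<lambda>(i, j). (inv b i, inv b j)"])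
       (auto simp: Y_def inversions_def Sym_apply_inv[OF b] Sym_inv_apply[OF b] Sym_range[OF b, simplified]
         Sym_range[OF Sym_inv[OF b], simplified])
  then have "card Y = len n a" by (simp add: len_eq_card_inversions bij_betw_same_card)
  with len_ab len_b card_Y card_C' show ?thesis unfolding C_def by linarith
qed

lemma len_comp_le: "a \<in> Sym n \<Longrightarrow> b \<in> Sym n \<Longrightarrow> len n (a \<circ> b) \<le> len n a + len n b"
  using len_comp[of a n b] by linarith

lemma len_comp_eq_add_iff:
  assumes a: "a \<in> Sym n" and b: "b \<in> Sym n"
  shows "len n (a \<circ> b) = len n a + len n b \<longleftrightarrow> inversions n b \<subseteq> inversions n (a \<circ> b)"
proof -
  let ?C = "{(i, j) \<in> inversions n b. a (b i) < a (b j)}"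
  have "finite ?C" by (rule finite_subset[OF _ finite_inversions]) blast
  then have "?C = {} \<longleftrightarrow> card ?C = 0" by simp
  then have "len n (a \<circ> b) = len n a + len n b \<longleftrightarrow> ?C = {}"
    using len_comp[OF a b] by linarith
  also have "\<dots> \<longleftrightarrow> inversions n b \<subseteq> inversions n (a \<circ> b)"
  proof -
    have ne: "a (b i) \<noteq> a (b j)" if "(i, j) \<in> inversions n b" for i j
      using that Sym_inj[OF a] Sym_inj[OF b] by (auto simp: inversions_def)
    have "a (b i) < a (b j) \<longleftrightarrow> (i, j) \<notin> inversions n (a \<circ> b)" if "(i, j) \<in> inversions n b" for i j
      using that ne[OF that] by (auto simp: inversions_def)
    then show ?thesis by auto
  qed
  finally show ?thesis .
qed

lemma len_inv:
  assumes p: "p \<in> Sym n" shows "len n (inv p) = len n p"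
proof -
  have "bij_betw (\<lambda>(i, j). (p j, p i)) (inversions n p) (inversions n (inv p))"
    by (rule bij_betw_byWitness[where f'="\<lambda>(i, j). (inv p j, inv p i)"])
       (auto simp: inversions_def Sym_apply_inv[OF p] Sym_inv_apply[OF p] Sym_range[OF p, simplified]
         Sym_range[OF Sym_inv[OF p], simplified])
  then show ?thesis by (simp add: len_eq_card_inversions bij_betw_same_card)
qed

lemma len_comp3_additive:
  assumes a: "a \<in> Sym n" and b: "b \<in> Sym n" and c: "c \<in> Sym n"
    and add: "len n (a \<circ> b \<circ> c) = len n a + len n b + len n c"
  shows "len n (a \<circ> b \<circ> c) = len n (a \<circ> b) + len n c"
    and "len n (a \<circ> b \<circ> c) = len n a + len n (b \<circ> c)"
proof -
  have "len n (a \<circ> b \<circ> c) = len n (a \<circ> (b \<circ> c))" by (simp add: comp_assoc)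
  then show "len n (a \<circ> b \<circ> c) = len n (a \<circ> b) + len n c"
    and "len n (a \<circ> b \<circ> c) = len n a + len n (b \<circ> c)"
    using len_comp_le[OF Sym_comp[OF a b] c] len_comp_le[OF a b]
      len_comp_le[OF a Sym_comp[OF b c]] len_comp_le[OF b c] add
    by linarith+
qed

section \<open>Transpositions\<close>

lemma len_comp_transpose_less:
  assumes p: "p \<in> Sym n" and ab: "1 \<le> a" "a < b" "b \<le> n" and pab: "p a < p b"
  shows "len n p < len n (p \<circ> Transposition.transpose a b)"
proof -
  define t where "t = Transposition.transpose a b"
  define q where "q = p \<circ> t"
  define phi where "phi = (\<lambda>(i, j). if t i < t j then (t i, t j) else (i, j))"
  have tt: "t (t x) = x" for x by (simp add: t_def)
  have "phi (phi (i, j)) = (i, j)" if "i < j" for i j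
    using that by (auto simp: phi_def tt)
  then have inj: "inj_on phi (inversions n p)"
    by (intro inj_on_inverseI[where g=phi]) (auto simp: inversions_def)
  have "phi ` inversions n p \<subseteq> inversions n q - {(a, b)}"
  proof (rule image_subsetI)
    fix x assume "x \<in> inversions n p"
    then obtain i j where x: "x = (i, j)" and r: "i \<in> {1..n}" "j \<in> {1..n}" "i < j" "p i > p j"
      by (auto simp: inversions_def)
    have tin: "t k \<in> {1..n}" if "k \<in> {1..n}" for k
      using that ab by (auto simp: t_def transpose_def)
    have "phi (i, j) \<in> inversions n q - {(a, b)}"
    proof (cases "t i < t j")
      case True
      moreover have "(t i, t j) \<noteq> (a, b)"
        using r ab by (auto simp: t_def transpose_def split: if_splits)
      ultimately show ?thesis using r tin[OF r(1)] tin[OF r(2)] by (simp add: phi_def inversions_def q_def tt)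
    next
      case False
      then have "q i > q j"
        using r ab pab by (auto simp: q_def t_def transpose_def split: if_splits)
      then show ?thesis using False r pab by (auto simp: phi_def inversions_def)
    qed
    then show "phi x \<in> inversions n q - {(a, b)}" using x by simp
  qed
  then have "card (phi ` inversions n p) \<le> card (inversions n q - {(a, b)})"
    by (simp add: card_mono)
  also have "\<dots> < card (inversions n q)"
    using ab pab by (intro card_Diff1_less finite_inversions) (simp add: inversions_def q_def t_def)
  finally show ?thesis by (simp add: len_eq_card_inversions card_image[OF inj] q_def t_def)
qed

abbreviation adj_transp :: "nat \<Rightarrow> nat \<Rightarrow> nat" where
  "adj_transp m \<equiv> Transposition.transpose m (Suc m)"

lemma Sym_adj_transp: "1 \<le> m \<Longrightarrow> m < n \<Longrightarrow> adj_transp m \<in> Sym n"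
  by (rule Sym_transpose) auto

lemma len_adj_transp: "1 \<le> m \<Longrightarrow> m < n \<Longrightarrow> len n (adj_transp m) = 1"
proof -
  assume "1 \<le> m" "m < n"
  then have "inversions n (adj_transp m) = {(m, Suc m)}"
    by (auto simp: inversions_def transpose_def split: if_splits)
  then show ?thesis by (simp add: len_eq_card_inversions)
qed

lemma adj_transp_less:
  assumes "i < j" and "(i, j) \<noteq> (m, Suc m)"
  shows "adj_transp m i < adj_transp m j"
  using assms by (auto simp: transpose_def)

lemma len_comp_adj_transp_ascent:
  assumes p: "p \<in> Sym n" and m: "1 \<le> m" "m < n" and asc: "p m < p (Suc m)"
  shows "len n (p \<circ> adj_transp m) = len n p + 1"
  using len_comp_transpose_less[OF p m(1) _ _ asc] len_comp_le[OF p Sym_adj_transp[OF m]]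
    len_adj_transp[OF m] m
  by simp

lemma len_comp_adj_transp_descent:
  assumes p: "p \<in> Sym n" and m: "1 \<le> m" "m < n" and desc: "p m > p (Suc m)"
  shows "len n (p \<circ> adj_transp m) + 1 = len n p"
proof -
  have "len n (p \<circ> adj_transp m \<circ> adj_transp m) = len n (p \<circ> adj_transp m) + 1"
    using desc by (intro len_comp_adj_transp_ascent Sym_comp p Sym_adj_transp m) simp_all
  then show ?thesis by (simp add: comp_assoc)
qed

lemma len_adj_transp_comp_descent:
  assumes y: "y \<in> Sym n" and m: "1 \<le> m" "m < n" and desc: "inv y m > inv y (Suc m)"
  shows "len n (adj_transp m \<circ> y) + 1 = len n y"
proof -
  have "inv (adj_transp m \<circ> y) = inv y \<circ> adj_transp m"
    using o_inv_distrib[OF bij_transpose permutes_bij[OF Sym_permutes[OF y]]] by simp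
  then show ?thesis
    using len_comp_adj_transp_descent[OF Sym_inv[OF y] m desc]
      len_inv[OF Sym_comp[OF Sym_adj_transp[OF m] y]] len_inv[OF y]
    by simp
qed

lemma exists_descent:
  assumes "len n q > 0"
  obtains m where "1 \<le> m" "m < n" "q m > q (Suc m)"
proof -
  obtain i j where r: "1 \<le> i" "i < j" "j \<le> n" "q i > q j"
    using assms by (auto simp: len_eq_card_inversions inversions_def card_gt_0_iff)
  have "\<exists>m. i \<le> m \<and> m < j \<and> q m > q (Suc m)"
  proof (rule ccontr)
    assume "\<nexists>m. i \<le> m \<and> m < j \<and> q m > q (Suc m)"
    then have ascending: "q k \<le> q (Suc k)" if "i \<le> k" "k < j" for k
      using that by (meson not_le)
    have "q i \<le> q k" if "i \<le> k" "k \<le> j" for k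
      using that
    proof (induction k rule: dec_induct)
      case (step k)
      then show ?case using ascending[of k] by simp
    qed simp
    from this[of j] r show False by simp
  qed
  then obtain m where "i \<le> m" "m < j" "q m > q (Suc m)" by blast
  with r show ?thesis by (intro that) auto
qed

section \<open>Weak orders\<close>

lemma left_weak_iff_inversions:
  "left_weak n v w \<longleftrightarrow> v \<in> Sym n \<and> w \<in> Sym n \<and> inversions n v \<subseteq> inversions n w"
proof
  assume "left_weak n v w"
  then show "v \<in> Sym n \<and> w \<in> Sym n \<and> inversions n v \<subseteq> inversions n w"
    unfolding left_weak_def using len_comp_eq_add_iff by blast
next
  assume *: "v \<in> Sym n \<and> w \<in> Sym n \<and> inversions n v \<subseteq> inversions n w"
  then have "w \<circ> inv v \<in> Sym n" "w = (w \<circ> inv v) \<circ> v"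
    using Sym_comp Sym_inv Sym_inv_apply by (auto simp: fun_eq_iff)
  with * show "left_weak n v w"
    unfolding left_weak_def using len_comp_eq_add_iff by metis
qed

lemma inversions_subsetI:
  assumes "\<And>i j. 1 \<le> i \<Longrightarrow> j \<le> n \<Longrightarrow> i < j \<Longrightarrow> p i > p j \<Longrightarrow> q i > q j"
  shows "inversions n p \<subseteq> inversions n q"
  using assms by (auto simp: inversions_def)

lemma inversions_subsetD:
  assumes "inversions n p \<subseteq> inversions n q" "1 \<le> i" "j \<le> n" "i < j" "p i > p j"
  shows "q i > q j"
proof -
  have "(i, j) \<in> inversions n p" using assms(2-) by (simp add: inversions_def)
  with assms(1) have "(i, j) \<in> inversions n q" by blast
  then show ?thesis by (simp add: inversions_def)
qed

lemma inversions_comp_adj_transp_mono: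
  assumes sub: "inversions n v - {(m, Suc m)} \<subseteq> inversions n w" and m: "1 \<le> m" "m < n"
  shows "inversions n (v \<circ> adj_transp m) - {(m, Suc m)} \<subseteq> inversions n (w \<circ> adj_transp m)"
proof
  fix x assume x: "x \<in> inversions n (v \<circ> adj_transp m) - {(m, Suc m)}"
  obtain i j where x_eq: "x = (i, j)" by fastforce
  with x have ij: "(i, j) \<in> inversions n (v \<circ> adj_transp m)" "(i, j) \<noteq> (m, Suc m)" by auto
  let ?i = "adj_transp m i" and ?j = "adj_transp m j"
  have "?i < ?j" using ij by (intro adj_transp_less) (auto simp: inversions_def)
  moreover have "(?i, ?j) \<noteq> (m, Suc m)"
    using ij by (auto simp: inversions_def transpose_def split: if_splits)
  ultimately have "(?i, ?j) \<in> inversions n v - {(m, Suc m)}"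
    using ij m by (auto simp: inversions_def transpose_def split: if_splits)
  with sub show "x \<in> inversions n (w \<circ> adj_transp m)"
    using ij x_eq by (auto simp: inversions_def)
qed

lemma left_weak_comp_adj_transp_descent:
  assumes uw: "left_weak n u w" and m: "1 \<le> m" "m < n"
    and asc: "u m < u (Suc m)" and desc: "w m > w (Suc m)"
  shows "left_weak n (u \<circ> adj_transp m) w"
proof -
  have u: "u \<in> Sym n" and w: "w \<in> Sym n" and sub: "inversions n u \<subseteq> inversions n w"
    using uw by (auto simp: left_weak_iff_inversions)
  note w_gt = inversions_subsetD[OF sub]
  have "inversions n (u \<circ> adj_transp m) \<subseteq> inversions n w"
  proof (rule inversions_subsetI)
    fix i j assume r: "1 \<le> i" "j \<le> n" "i < j" "(u \<circ> adj_transp m) i > (u \<circ> adj_transp m) j"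
    consider "i = m" "j = Suc m" | "i = m" "j > Suc m" | "i = Suc m" | "j = m"
      | "j = Suc m" "i < m" | "i \<noteq> m" "i \<noteq> Suc m" "j \<noteq> m" "j \<noteq> Suc m"
      using r(3) by linarith
    then show "w i > w j"
    proof cases
      case 1 then show ?thesis using desc by simp
    next
      case 2 then show ?thesis using w_gt[of "Suc m" j] r m desc by simp
    next
      case 3 then show ?thesis using w_gt[of "Suc m" j] r asc by simp
    next
      case 4 then show ?thesis using w_gt[of i m] r asc by simp
    next
      case 5 then show ?thesis using w_gt[of i m] r desc by simp
    next
      case 6 then show ?thesis using w_gt[of i j] r by simp
    qed
  qed
  then show ?thesis
    using u w m by (simp add: left_weak_iff_inversions Sym_comp Sym_adj_transp)
qed

lemma left_weak_comp_adj_transp: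
  assumes uw: "left_weak n u w" and m: "1 \<le> m" "m < n" and asc: "w m < w (Suc m)"
  shows "left_weak n (u \<circ> adj_transp m) (w \<circ> adj_transp m)"
proof -
  have "inversions n u - {(m, Suc m)} \<subseteq> inversions n w"
    using uw by (auto simp: left_weak_iff_inversions)
  then have "inversions n (u \<circ> adj_transp m) - {(m, Suc m)} \<subseteq> inversions n (w \<circ> adj_transp m)"
    using m by (rule inversions_comp_adj_transp_mono)
  moreover have "(m, Suc m) \<in> inversions n (w \<circ> adj_transp m)"
    using m asc by (simp add: inversions_def)
  ultimately show ?thesis
    using uw m by (auto simp: left_weak_iff_inversions Sym_comp Sym_adj_transp)
qed

lemma left_weak_comp_adj_transp_cancel:
  assumes vw: "left_weak n v (w \<circ> adj_transp m)" and w: "w \<in> Sym n" and m: "1 \<le> m" "m < n"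
    and desc: "v m > v (Suc m)"
  shows "left_weak n (v \<circ> adj_transp m) w"
proof -
  have "inversions n v - {(m, Suc m)} \<subseteq> inversions n (w \<circ> adj_transp m)"
    using vw by (auto simp: left_weak_iff_inversions)
  then have "inversions n (v \<circ> adj_transp m) - {(m, Suc m)}
      \<subseteq> inversions n (w \<circ> adj_transp m \<circ> adj_transp m)"
    using m by (rule inversions_comp_adj_transp_mono)
  then have "inversions n (v \<circ> adj_transp m) - {(m, Suc m)} \<subseteq> inversions n w"
    by (simp add: comp_assoc)
  moreover have "(m, Suc m) \<notin> inversions n (v \<circ> adj_transp m)"
    using desc by (simp add: inversions_def)
  ultimately show ?thesis
    using vw w m by (auto simp: left_weak_iff_inversions Sym_comp Sym_adj_transp)
qed

lemma left_weak_of_comp_adj_transp: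
  assumes vw: "left_weak n v (w \<circ> adj_transp m)" and w: "w \<in> Sym n" and m: "1 \<le> m" "m < n"
    and asc_v: "v m < v (Suc m)" and asc_w: "w m < w (Suc m)"
  shows "left_weak n v w"
proof -
  have "left_weak n (v \<circ> adj_transp m) (w \<circ> adj_transp m)"
    using left_weak_comp_adj_transp_descent[OF vw m asc_v] asc_w by simp
  then have "left_weak n (v \<circ> adj_transp m \<circ> adj_transp m) w"
    using left_weak_comp_adj_transp_cancel[OF _ w m] asc_v by simp
  then show ?thesis by (simp add: comp_assoc)
qed

lemma right_weakI:
  "v \<in> Sym n \<Longrightarrow> z \<in> Sym n \<Longrightarrow> len n (v \<circ> z) = len n v + len n z \<Longrightarrow> right_weak n v (v \<circ> z)"
  unfolding right_weak_def using Sym_comp by blast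

lemma right_weak_comp_adj_transp_descent:
  assumes vw: "right_weak n v w" and m: "1 \<le> m" "m < n" and desc: "v m > v (Suc m)"
  shows "right_weak n (v \<circ> adj_transp m) w"
proof -
  obtain z where z: "z \<in> Sym n" and w: "w = v \<circ> z" and add: "len n w = len n v + len n z"
    using vw unfolding right_weak_def by blast
  have v: "v \<in> Sym n" using vw by (simp add: right_weak_def)
  have vs: "v \<circ> adj_transp m \<in> Sym n" using Sym_comp[OF v Sym_adj_transp[OF m]] .
  have w_eq: "v \<circ> adj_transp m \<circ> adj_transp m \<circ> z = w" by (simp add: w fun_eq_iff)
  have "len n (v \<circ> adj_transp m \<circ> adj_transp m \<circ> z)
      = len n (v \<circ> adj_transp m) + len n (adj_transp m) + len n z"
    using w_eq add len_comp_adj_transp_descent[OF v m desc] len_adj_transp[OF m] by simp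
  from len_comp3_additive(2)[OF vs Sym_adj_transp[OF m] z this]
  have "len n w = len n (v \<circ> adj_transp m) + len n (adj_transp m \<circ> z)"
    unfolding w_eq .
  moreover have "v \<circ> adj_transp m \<circ> (adj_transp m \<circ> z) = w" by (simp add: w fun_eq_iff)
  ultimately show ?thesis
    using right_weakI[OF vs Sym_comp[OF Sym_adj_transp[OF m] z]] by simp
qed

lemma len_comp_additive_adj_transp:
  assumes u: "u \<in> Sym n" and y: "y \<in> Sym n" and m: "1 \<le> m" "m < n"
    and desc_y: "inv y m > inv y (Suc m)" and uy: "len n (u \<circ> y) = len n u + len n y"
  shows "u m < u (Suc m)"
    and "len n (u \<circ> adj_transp m \<circ> (adj_transp m \<circ> y))
      = len n (u \<circ> adj_transp m) + len n (adj_transp m \<circ> y)"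
proof -
  let ?s = "adj_transp m"
  have s: "?s \<in> Sym n" using Sym_adj_transp[OF m] .
  have sy: "?s \<circ> y \<in> Sym n" using Sym_comp[OF s y] .
  have "len n (u \<circ> ?s \<circ> (?s \<circ> y)) = len n u + len n ?s + len n (?s \<circ> y)"
    using uy len_adj_transp_comp_descent[OF y m desc_y] len_adj_transp[OF m]
    by (simp add: fun_eq_iff comp_def)
  from len_comp3_additive(1)[OF u s sy this] this
  have len_us: "len n (u \<circ> ?s) = len n u + 1"
    and "len n (u \<circ> ?s \<circ> (?s \<circ> y)) = len n (u \<circ> ?s) + len n (?s \<circ> y)"
    using len_adj_transp[OF m] by simp_all
  then show "len n (u \<circ> ?s \<circ> (?s \<circ> y)) = len n (u \<circ> ?s) + len n (?s \<circ> y)" by blast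
  show "u m < u (Suc m)"
  proof (rule ccontr)
    assume "\<not> ?thesis"
    with Sym_inj[OF u] have "u m > u (Suc m)" by (metis n_not_Suc_n nat_neq_iff)
    from len_comp_adj_transp_descent[OF u m this] len_us show False by simp
  qed
qed

section \<open>Bruhat order and the lifting property\<close>

lemma bruhat_step_Sym:
  assumes "bruhat_step n v w"
  shows "v \<in> Sym n" and "w \<in> Sym n"
  using assms Sym_comp Sym_transpose unfolding bruhat_step_def by blast+

lemma bruhat_less_len_less:
  assumes "bruhat_less n a b"
  shows "len n a < len n b"
proof -
  have "len n x < len n y" if "bruhat_step n x y" for x y
    using that by (auto simp: bruhat_step_def)
  with assms show ?thesis
    unfolding bruhat_less_def by (induction rule: tranclp_induct) (blast intro: less_trans)+
qed

lemma bruhat_stepI: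
  assumes c: "c \<in> Sym n" and pq: "1 \<le> p" "p < q" "q \<le> n" and asc: "c p < c q"
  shows "bruhat_step n c (c \<circ> Transposition.transpose p q)"
  unfolding bruhat_step_def using c pq len_comp_transpose_less[OF c pq asc]
  by (intro conjI bexI[where x=p] bexI[where x=q]) auto

lemma bruhat_stepE:
  assumes "bruhat_step n c c'"
  obtains p q where "1 \<le> p" "p < q" "q \<le> n" "c' = c \<circ> Transposition.transpose p q" "c p < c q"
proof -
  obtain a b where ab: "c \<in> Sym n" "a \<in> {1..n}" "b \<in> {1..n}" "a \<noteq> b"
    "c' = c \<circ> Transposition.transpose a b" "len n c' > len n c"
    using assms unfolding bruhat_step_def by blast
  define p q where "p = min a b" and "q = max a b"
  have pq: "1 \<le> p" "p < q" "q \<le> n" using ab by (auto simp: p_def q_def)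
  have c': "c' = c \<circ> Transposition.transpose p q"
    using ab(5) by (cases "a < b") (auto simp: p_def q_def transpose_commute)
  have "c p < c q"
  proof (rule ccontr)
    assume "\<not> c p < c q"
    moreover have "c p \<noteq> c q" using Sym_inj[OF ab(1)] pq by simp
    ultimately have "c' p < c' q" using c' by simp
    from len_comp_transpose_less[OF bruhat_step_Sym(2)[OF assms] pq this]
    have "len n c' < len n (c' \<circ> Transposition.transpose p q)" .
    also have "c' \<circ> Transposition.transpose p q = c" by (simp add: c' comp_assoc)
    finally show False using ab(6) by simp
  qed
  with pq c' show ?thesis by (rule that)
qed

lemma bruhat_rtrancl_ascent_descent:
  assumes c: "c \<in> Sym n" and pq: "1 \<le> p" "p < q" "q \<le> n" and asc_pq: "c p < c q"
    and m: "1 \<le> m" "m < n" and asc: "c m < c (Suc m)"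
    and desc: "(c \<circ> Transposition.transpose p q) m > (c \<circ> Transposition.transpose p q) (Suc m)"
  shows "(bruhat_step n)\<^sup>*\<^sup>* c (c \<circ> Transposition.transpose p q \<circ> adj_transp m)"
proof -
  \<comment> \<open>The transposition must move m or Suc m, and c p < c q excludes p = Suc m and q = m.\<close>
  consider "p = m" "q = Suc m" | "p = m" "q > Suc m" | "q = Suc m" "p < m"
    using pq asc_pq asc desc by (auto simp: transpose_def split: if_splits)
  then show ?thesis
  proof cases
    case 1
    then show ?thesis by (simp add: comp_assoc)
  next
    case 2
    have "bruhat_step n c (c \<circ> adj_transp m)"
      using bruhat_stepI[OF c m(1) _ _ asc] m by simp
    moreover have "bruhat_step n (c \<circ> adj_transp m) (c \<circ> adj_transp m \<circ> Transposition.transpose (Suc m) q)"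
      using bruhat_stepI[OF Sym_comp[OF c Sym_adj_transp[OF m]], of "Suc m" q] 2 pq asc_pq by simp
    moreover have "c \<circ> adj_transp m \<circ> Transposition.transpose (Suc m) q
        = c \<circ> Transposition.transpose p q \<circ> adj_transp m"
      using 2 by (auto simp: transpose_def fun_eq_iff)
    ultimately show ?thesis by (metis converse_rtranclp_into_rtranclp r_into_rtranclp)
  next
    case 3
    have "c p < c m" using 3 desc by simp
    then have step1: "bruhat_step n c (c \<circ> Transposition.transpose p m)"
      using bruhat_stepI[OF c pq(1), of m] 3 m by simp
    moreover have "bruhat_step n (c \<circ> Transposition.transpose p m)
        (c \<circ> Transposition.transpose p m \<circ> Transposition.transpose p (Suc m))"
      using bruhat_stepI[OF bruhat_step_Sym(2)[OF step1] pq(1), of "Suc m"] 3 m asc by simp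
    moreover have "c \<circ> Transposition.transpose p m \<circ> Transposition.transpose p (Suc m)
        = c \<circ> Transposition.transpose p q \<circ> adj_transp m"
      using 3 by (auto simp: transpose_def fun_eq_iff)
    ultimately show ?thesis by (metis converse_rtranclp_into_rtranclp r_into_rtranclp)
  qed
qed

text \<open>The Bruhat-smaller of c and c s_m; its monotonicity is the lifting property of Bruhat order.\<close>
definition adj_min :: "nat \<Rightarrow> (nat \<Rightarrow> nat) \<Rightarrow> nat \<Rightarrow> nat" where
  "adj_min m c = (if c m < c (Suc m) then c else c \<circ> adj_transp m)"

lemma bruhat_rtrancl_adj_min_step:
  assumes st: "bruhat_step n c c'" and m: "1 \<le> m" "m < n"
  shows "(bruhat_step n)\<^sup>*\<^sup>* (adj_min m c) (adj_min m c')"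
proof -
  obtain p q where pq: "1 \<le> p" "p < q" "q \<le> n" and c': "c' = c \<circ> Transposition.transpose p q"
    and asc_pq: "c p < c q"
    using st by (rule bruhat_stepE)
  have c: "c \<in> Sym n" and c'_Sym: "c' \<in> Sym n" using bruhat_step_Sym[OF st] .
  have cs: "c \<circ> adj_transp m \<in> Sym n" using Sym_comp[OF c Sym_adj_transp[OF m]] .
  have "c m \<noteq> c (Suc m)" "c' m \<noteq> c' (Suc m)" using Sym_inj[OF c] Sym_inj[OF c'_Sym] by simp_all
  then consider "c m < c (Suc m)" "c' m < c' (Suc m)" | "c m < c (Suc m)" "c' m > c' (Suc m)"
    | "c m > c (Suc m)" "c' m < c' (Suc m)" | "c m > c (Suc m)" "c' m > c' (Suc m)"
    by linarith
  then show ?thesis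
  proof cases
    case 1
    then show ?thesis using st by (simp add: adj_min_def)
  next
    case 2
    then show ?thesis
      using bruhat_rtrancl_ascent_descent[OF c pq asc_pq m] by (simp add: adj_min_def c')
  next
    case 3
    then have "bruhat_step n (c \<circ> adj_transp m) (c \<circ> adj_transp m \<circ> adj_transp m)"
      using bruhat_stepI[OF cs m(1), of "Suc m"] m by simp
    with st 3 show ?thesis by (simp add: adj_min_def comp_assoc)
  next
    case 4
    let ?p = "adj_transp m p" and ?q = "adj_transp m q"
    have "(p, q) \<noteq> (m, Suc m)" using 4 asc_pq by auto
    then have "?p < ?q" using pq by (intro adj_transp_less)
    moreover have "1 \<le> ?p" "?q \<le> n" using pq m by (auto simp: transpose_def)
    ultimately have "bruhat_step n (c \<circ> adj_transp m) (c \<circ> adj_transp m \<circ> Transposition.transpose ?p ?q)"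
      using bruhat_stepI[OF cs] asc_pq by simp
    moreover have "c \<circ> adj_transp m \<circ> Transposition.transpose ?p ?q = c' \<circ> adj_transp m"
      by (auto simp: c' transpose_def fun_eq_iff)
    ultimately show ?thesis using 4 by (simp add: adj_min_def)
  qed
qed

lemma bruhat_rtrancl_adj_min:
  assumes "bruhat_less n a b" and m: "1 \<le> m" "m < n"
  shows "(bruhat_step n)\<^sup>*\<^sup>* (adj_min m a) (adj_min m b)"
  using assms(1) unfolding bruhat_less_def
  by (induction rule: tranclp_induct)
    (use bruhat_rtrancl_adj_min_step[OF _ m] in \<open>blast intro: rtranclp_trans\<close>)+

section \<open>Induction on the length of inv u \<circ> \<pi>\<close>

lemma exists_bruhat_above_of_comp_adj_transp:
  assumes u: "u \<in> Sym n" and w: "w \<in> Sym n" and m: "1 \<le> m" "m < n"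
    and asc_u: "u m < u (Suc m)" and asc_w: "w m < w (Suc m)"
    and less: "bruhat_less n (u \<circ> adj_transp m) v"
    and vw: "left_weak n v (w \<circ> adj_transp m)" and v\<pi>: "right_weak n v \<pi>"
  shows "\<exists>u' \<in> Sym n. bruhat_less n u u' \<and> left_weak n u' w \<and> right_weak n u' \<pi>"
proof -
  have v: "v \<in> Sym n" using vw by (simp add: left_weak_def)
  have step: "bruhat_step n u (u \<circ> adj_transp m)"
    using bruhat_stepI[OF u m(1) _ _ asc_u] m by simp
  have "v m \<noteq> v (Suc m)" using Sym_inj[OF v] by simp
  then consider "v m > v (Suc m)" | "v m < v (Suc m)" by linarith
  then show ?thesis
  proof cases
    case 1
    let ?u' = "v \<circ> adj_transp m"
    have "adj_min m (u \<circ> adj_transp m) = u" "adj_min m v = ?u'"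
      using asc_u 1 by (simp_all add: adj_min_def comp_assoc)
    then have "(bruhat_step n)\<^sup>*\<^sup>* u ?u'"
      using bruhat_rtrancl_adj_min[OF less m] by simp
    moreover have "len n u < len n ?u'"
      using bruhat_less_len_less[OF less] len_comp_adj_transp_ascent[OF u m asc_u]
        len_comp_adj_transp_descent[OF v m 1] by simp
    ultimately have "bruhat_less n u ?u'"
      unfolding bruhat_less_def by (metis less_irrefl rtranclpD)
    moreover have "left_weak n ?u' w" using left_weak_comp_adj_transp_cancel[OF vw w m 1] .
    moreover have "right_weak n ?u' \<pi>" using right_weak_comp_adj_transp_descent[OF v\<pi> m 1] .
    ultimately show ?thesis using Sym_comp[OF v Sym_adj_transp[OF m]] by blast
  next
    case 2
    have "bruhat_less n u v"
      using step less unfolding bruhat_less_def by (rule tranclp_into_tranclp2)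
    then show ?thesis using v v\<pi> left_weak_of_comp_adj_transp[OF vw w m 2 asc_w] by blast
  qed
qed

lemma exists_bruhat_above:
  assumes "left_weak n u w" and "y \<in> Sym n"
    and "len n (u \<circ> y) = len n u + len n y" and "len n (w \<circ> y) < len n w + len n y"
  shows "\<exists>u' \<in> Sym n. bruhat_less n u u' \<and> left_weak n u' w \<and> right_weak n u' (u \<circ> y)"
  using assms
proof (induction "len n y" arbitrary: u y w rule: less_induct)
  case less
  note uw = less.prems(1) and y = less.prems(2) and uy = less.prems(3) and wy = less.prems(4)
  have u: "u \<in> Sym n" and w: "w \<in> Sym n" using uw by (simp_all add: left_weak_def)
  have "len n w \<le> len n (w \<circ> y) + len n y"
    using len_comp_le[OF Sym_comp[OF w y] Sym_inv[OF y]] len_inv[OF y]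
    by (simp add: comp_assoc permutes_inv_o(1)[OF Sym_permutes[OF y]])
  with wy have "len n (inv y) > 0" using len_inv[OF y] by linarith
  then obtain m where m: "1 \<le> m" "m < n" and desc_y: "inv y m > inv y (Suc m)"
    by (rule exists_descent)
  let ?s = "adj_transp m"
  define y' where "y' = ?s \<circ> y"
  have y': "y' \<in> Sym n" using Sym_comp[OF Sym_adj_transp[OF m] y] by (simp add: y'_def)
  have us: "u \<circ> ?s \<in> Sym n" using Sym_comp[OF u Sym_adj_transp[OF m]] .
  have len_y': "len n y' + 1 = len n y"
    using len_adj_transp_comp_descent[OF y m desc_y] by (simp add: y'_def)
  have uy_eq: "u \<circ> ?s \<circ> y' = u \<circ> y" and wy_eq: "w \<circ> ?s \<circ> y' = w \<circ> y"
    by (simp_all add: y'_def fun_eq_iff)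
  note asc_u = len_comp_additive_adj_transp(1)[OF u y m desc_y uy]
  have us_y': "len n (u \<circ> ?s \<circ> y') = len n (u \<circ> ?s) + len n y'"
    using len_comp_additive_adj_transp(2)[OF u y m desc_y uy] by (simp add: y'_def)
  have us_weak: "right_weak n (u \<circ> ?s) (u \<circ> y)"
    using right_weakI[OF us y' us_y'] by (simp add: uy_eq)
  have "w m \<noteq> w (Suc m)" using Sym_inj[OF w] by simp
  then consider "w m > w (Suc m)" | "w m < w (Suc m)" by linarith
  then show ?case
  proof cases
    case 1
    have "bruhat_less n u (u \<circ> ?s)"
      using bruhat_stepI[OF u m(1) _ _ asc_u] m unfolding bruhat_less_def by auto
    then show ?thesis
      using left_weak_comp_adj_transp_descent[OF uw m asc_u 1] us_weak us by blast
  next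
    case 2
    have "left_weak n (u \<circ> ?s) (w \<circ> ?s)" using left_weak_comp_adj_transp[OF uw m 2] .
    moreover have "len n (w \<circ> ?s \<circ> y') < len n (w \<circ> ?s) + len n y'"
      using wy wy_eq len_y' len_comp_adj_transp_ascent[OF w m 2] by simp
    moreover have "len n y' < len n y" using len_y' by simp
    ultimately obtain v where "bruhat_less n (u \<circ> ?s) v" "left_weak n v (w \<circ> ?s)"
      "right_weak n v (u \<circ> ?s \<circ> y')"
      using less.hyps[OF _ _ y' us_y'] by blast
    then show ?thesis
      using exists_bruhat_above_of_comp_adj_transp[OF u w m asc_u 2] by (simp add: uy_eq)
  qed
qed

theorem lemma7p1:
  fixes n :: nat and w \<pi> u :: "nat \<Rightarrow> nat"
  assumes "w \<in> Sym n" and "\<pi> \<in> Sym n" and "u \<in> Sym n"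
    and "left_weak n u w" and "right_weak n u \<pi>"
    and "len n (w \<circ> inv u) + len n u + len n (inv u \<circ> \<pi>) > len n (w \<circ> inv u \<circ> \<pi>)"
  shows "\<exists>u' \<in> Sym n. bruhat_less n u u' \<and> left_weak n u' w \<and> right_weak n u' \<pi>"
proof -
  obtain z where z: "w = z \<circ> u" "len n w = len n z + len n u"
    using assms(4) unfolding left_weak_def by blast
  obtain y where y: "y \<in> Sym n" "\<pi> = u \<circ> y" "len n \<pi> = len n u + len n y"
    using assms(5) unfolding right_weak_def by blast
  have "w \<circ> inv u = z" and "inv u \<circ> \<pi> = y" and "w \<circ> inv u \<circ> \<pi> = w \<circ> y"
    using Sym_inv_apply[OF assms(3)] Sym_apply_inv[OF assms(3)] by (auto simp: z(1) y(2) fun_eq_iff)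
  with assms(6) z(2) have "len n (w \<circ> y) < len n w + len n y" by simp
  from exists_bruhat_above[OF assms(4) y(1) _ this] y show ?thesis by simp
qed

end
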